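(* Let $Q$ be a simply-laced cluster quiver which does not contain any non-oriented full cycle. Let $S$ and $S'$ be two different sets of arrows of $Q$ such that for every full cycle $C$ of $Q$, the number of arrows of $C$ contained in $S$ and the number of arrows of $C$ contained in $S'$ have the same parity. Then the signed graph $\Sigma(q_{S'})$ can be obtained from $\Sigma(q_S)$ by a sequence of sign changes $r_{i_1},\dots,r_{i_m}$ at vertices such that each vertex is used at most once and not all vertices are used.
   Context: A cluster quiver is a finite quiver without loops and oriented 2-cycles; simply-laced means there is at most one arrow between any two vertices. A cycle is a cycle of length $\ge3$ without repeated vertices in the underlying graph; it is full if the full subquiver on its vertices contains no other arrows, and oriented if its arrows go consistently around it. A signed graph is a graph whose edges are either solid or dotted. For a set $S$ of arrows of $Q$, $\Sigma(q_S)$ is the underlying undirected graph of $Q$ in which edges coming from arrows in $S$ are dotted and all other edges are solid (it is the signed graph of the quadratic form $q_S(x)=\sum_ix_i^2+\sum_{i<j}a_{ij}x_ix_j$ with $a_{ij}=1$ for a dotted edge, $-1$ for a solid edge, $0$ otherwise). For a vertex $i$ of a signed graph $\Sigma$, the sign change $r_i(\Sigma)$ is the signed graph obtained by switching solid/dotted on every edge incident to $i$. *)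

theory Defs
  imports Main
begin

text \<open>A quiver is given by a vertex set V and an arrow set A (pairs (source, target)).
  Representing arrows as a set of pairs means there is at most one arrow from u to v.\<close>

definition cluster_quiver :: "'a set \<Rightarrow> ('a \<times> 'a) set \<Rightarrow> bool" where
  "cluster_quiver V A \<longleftrightarrow> finite V \<and> A \<subseteq> V \<times> V
     \<and> (\<forall>v. (v, v) \<notin> A) \<and> (\<forall>u v. (u, v) \<in> A \<longrightarrow> (v, u) \<notin> A)"

text \<open>Simply-laced: at most one arrow between any two vertices (automatic for a set of
  pairs without oriented 2-cycles, stated explicitly for readability).\<close>
definition simply_laced :: "('a \<times> 'a) set \<Rightarrow> bool" where
  "simply_laced A \<longleftrightarrow> (\<forall>u v. \<not> ((u, v) \<in> A \<and> (v, u) \<in> A))"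

definition adjacent :: "('a \<times> 'a) set \<Rightarrow> 'a \<Rightarrow> 'a \<Rightarrow> bool" where
  "adjacent A u v \<longleftrightarrow> (u, v) \<in> A \<or> (v, u) \<in> A"

definition nxt :: "'a list \<Rightarrow> nat \<Rightarrow> 'a" where
  "nxt c i = c ! (Suc i mod length c)"

definition is_cycle :: "'a set \<Rightarrow> ('a \<times> 'a) set \<Rightarrow> 'a list \<Rightarrow> bool" where
  "is_cycle V A c \<longleftrightarrow> distinct c \<and> length c \<ge> 3 \<and> set c \<subseteq> V
     \<and> (\<forall>i < length c. adjacent A (c ! i) (nxt c i))"

definition cycle_arrows :: "('a \<times> 'a) set \<Rightarrow> 'a list \<Rightarrow> ('a \<times> 'a) set" where
  "cycle_arrows A c = {(u, v) \<in> A. \<exists>i < length c.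
       (u = c ! i \<and> v = nxt c i) \<or> (v = c ! i \<and> u = nxt c i)}"

definition full_cycle :: "'a set \<Rightarrow> ('a \<times> 'a) set \<Rightarrow> 'a list \<Rightarrow> bool" where
  "full_cycle V A c \<longleftrightarrow> is_cycle V A c \<and>
     (\<forall>(u, v) \<in> A. u \<in> set c \<and> v \<in> set c \<longrightarrow> (u, v) \<in> cycle_arrows A c)"

definition oriented_cycle :: "('a \<times> 'a) set \<Rightarrow> 'a list \<Rightarrow> bool" where
  "oriented_cycle A c \<longleftrightarrow> (\<forall>i < length c. (c ! i, nxt c i) \<in> A)
                          \<or> (\<forall>i < length c. (nxt c i, c ! i) \<in> A)"

text \<open>Signed graph as a symmetric function: 1 = dotted edge, -1 = solid edge, 0 = no edge
  (the coefficients a_ij of the quadratic form q_S).\<close>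
type_synonym 'a signed_graph = "'a \<Rightarrow> 'a \<Rightarrow> int"

definition Sigma_q :: "('a \<times> 'a) set \<Rightarrow> ('a \<times> 'a) set \<Rightarrow> 'a signed_graph" where
  "Sigma_q A S = (\<lambda>i j. if adjacent A i j
       then (if (i, j) \<in> S \<or> (j, i) \<in> S then 1 else -1) else 0)"

definition sign_change :: "'a \<Rightarrow> 'a signed_graph \<Rightarrow> 'a signed_graph" where
  "sign_change v \<Sigma> = (\<lambda>i j. if (i = v) \<noteq> (j = v) then - \<Sigma> i j else \<Sigma> i j)"

definition sign_changes :: "'a list \<Rightarrow> 'a signed_graph \<Rightarrow> 'a signed_graph" where
  "sign_changes vs \<Sigma> = fold sign_change vs \<Sigma>"

end

theory Submission
  imports Defs
begin

text \<open>Weight each edge of the underlying graph by the number of the sets S, S' containing its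
  arrow. Then Sigma(q_S') is Sigma(q_S) with exactly the edges of odd weight switched, and the
  hypothesis says that every full cycle has even weight. Splitting a closed walk at a repeated
  vertex, or a non-full cycle along a chord (whose weight is then counted twice), shows that
  every closed walk has even weight. Hence the parity of the weight of a walk from a fixed root of
  each component to a vertex v does not depend on the walk, and the set X of vertices where it is
  odd has the odd edges as its cut. Switching at the vertices of X turns Sigma(q_S) into
  Sigma(q_S'), and X \<noteq> V because an arrow in exactly one of S, S' has exactly one end in X.\<close>

fun path_weight :: "('a \<Rightarrow> 'a \<Rightarrow> nat) \<Rightarrow> 'a list \<Rightarrow> nat" where
  "path_weight f (x # y # xs) = f x y + path_weight f (y # xs)"
| "path_weight f _ = 0"

lemma path_weight_Cons:
  "path_weight f (x # xs) = (if xs = [] then 0 else f x (hd xs) + path_weight f xs)"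
  by (cases xs) auto

lemma path_weight_append:
  "path_weight f (xs @ ys) = path_weight f xs + path_weight f ys
     + (if xs = [] \<or> ys = [] then 0 else f (last xs) (hd ys))"
  by (induction xs rule: induct_list012) (auto simp: path_weight_Cons)

lemma path_weight_rev: "path_weight f (rev xs) = path_weight (\<lambda>x y. f y x) xs"
  by (induction xs rule: induct_list012) (auto simp: path_weight_append)

lemma path_weight_add: "path_weight (\<lambda>x y. f x y + g x y) xs = path_weight f xs + path_weight g xs"
  by (induction xs rule: induct_list012) auto

lemma path_weight_conv_sum:
  "path_weight f xs = (\<Sum>i < length xs - 1. f (xs ! i) (xs ! Suc i))"
  by (induction xs rule: induct_list012) (auto simp: sum.lessThan_Suc_shift simp del: sum.lessThan_Suc)

lemma path_weight_Cons_append: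
  "path_weight f (x # xs @ y # ys) = path_weight f (x # xs) + f (last (x # xs)) y + path_weight f (y # ys)"
  using path_weight_append[of f "x # xs" "y # ys"] by simp

lemma path_weight_glue:
  "xs \<noteq> [] \<Longrightarrow> ys \<noteq> [] \<Longrightarrow> last xs = hd ys
    \<Longrightarrow> path_weight f (xs @ tl ys) = path_weight f xs + path_weight f ys"
  by (cases ys) (auto simp: path_weight_append path_weight_Cons)

lemma successively_Cons_append:
  "successively P (x # xs @ y # ys) \<longleftrightarrow>
     successively P (x # xs) \<and> P (last (x # xs)) y \<and> successively P (y # ys)"
  using successively_append_iff[of P "x # xs" "y # ys"] by auto

definition cycle_weight :: "('a \<Rightarrow> 'a \<Rightarrow> nat) \<Rightarrow> 'a list \<Rightarrow> nat" where
  "cycle_weight f c = path_weight f (c @ [hd c])"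

definition closed_walk :: "('a \<times> 'a) set \<Rightarrow> 'a list \<Rightarrow> bool" where
  "closed_walk A c \<longleftrightarrow> c \<noteq> [] \<and> successively (adjacent A) (c @ [hd c])"

lemma cycle_weight_Cons: "cycle_weight f (x # xs) = path_weight f (x # xs) + f (last (x # xs)) x"
  using path_weight_append[of f "x # xs" "[x]"] by (simp add: cycle_weight_def)

lemma closed_walk_Cons:
  "closed_walk A (x # xs) \<longleftrightarrow> successively (adjacent A) (x # xs) \<and> adjacent A (last (x # xs)) x"
  using successively_append_iff[of "adjacent A" "x # xs" "[x]"] by (simp add: closed_walk_def)

lemma cycle_weight_add:
  "cycle_weight (\<lambda>x y. f x y + g x y) c = cycle_weight f c + cycle_weight g c"
  by (simp add: cycle_weight_def path_weight_add)

lemma cycle_weight_rotate: "cycle_weight f (xs @ y # ys) = cycle_weight f (y # ys @ xs)"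
  by (cases xs) (simp_all add: cycle_weight_Cons path_weight_Cons_append)

lemma closed_walk_rotate: "closed_walk A (xs @ y # ys) \<longleftrightarrow> closed_walk A (y # ys @ xs)"
  by (cases xs) (auto simp: closed_walk_Cons successively_Cons_append)

lemma cycle_weight_split:
  "cycle_weight f (xs @ b # ys @ b # zs) = cycle_weight f (b # ys) + cycle_weight f (b # zs @ xs)"
  unfolding cycle_weight_rotate[of f xs] by (simp add: cycle_weight_Cons path_weight_Cons_append)

lemma closed_walk_split:
  "closed_walk A (xs @ b # ys @ b # zs) \<Longrightarrow> closed_walk A (b # ys) \<and> closed_walk A (b # zs @ xs)"
  unfolding closed_walk_rotate[of A xs] by (simp add: closed_walk_Cons successively_Cons_append)

lemma repeated_vertex_weight_even:
  assumes "\<not> distinct c" "closed_walk A c"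
    and shorter_even:
      "\<And>c'. closed_walk A c' \<Longrightarrow> length c' < length c \<Longrightarrow> even (cycle_weight f c')"
  shows "even (cycle_weight f c)"
proof -
  obtain xs b ys zs where c: "c = xs @ b # ys @ b # zs"
    using not_distinct_decomp[OF assms(1)] by fastforce
  have "closed_walk A (b # ys)" "closed_walk A (b # zs @ xs)"
    using closed_walk_split[of A xs b ys zs] assms(2) c by simp_all
  then have "even (cycle_weight f (b # ys))" "even (cycle_weight f (b # zs @ xs))"
    by (auto intro!: shorter_even simp: c)
  then show ?thesis
    by (simp add: c cycle_weight_split)
qed

lemma cycle_weight_chord:
  assumes "\<And>x y. f x y = f y x"
  shows "cycle_weight f (u # ys @ [v]) + cycle_weight f (v # ws @ [u])
     = cycle_weight f (u # ys @ v # ws) + 2 * f u v"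
  using assms[of v u] by (simp add: cycle_weight_Cons path_weight_Cons_append)

lemma closed_walk_chord:
  "closed_walk A (u # ys @ v # ws) \<Longrightarrow> adjacent A u v
    \<Longrightarrow> closed_walk A (u # ys @ [v]) \<and> closed_walk A (v # ws @ [u])"
  by (auto simp: closed_walk_Cons successively_Cons_append adjacent_def)

lemma snoc_hd_nth_Suc: "i < length c \<Longrightarrow> (c @ [hd c]) ! Suc i = nxt c i"
proof (cases "Suc i < length c")
  case False
  moreover assume "i < length c"
  ultimately have "Suc i = length c" by simp
  then show ?thesis by (cases c) (auto simp: nxt_def)
qed (simp add: nxt_def nth_append)

lemma snoc_hd_nth: "i < length c \<Longrightarrow> (c @ [hd c]) ! i = c ! i"
  by (simp add: nth_append)

lemma cycle_weight_conv_sum: "cycle_weight f c = (\<Sum>i < length c. f (c ! i) (nxt c i))"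
  unfolding cycle_weight_def path_weight_conv_sum
  by (auto simp: snoc_hd_nth_Suc snoc_hd_nth simp del: nth_append intro: sum.cong)

lemma closed_walk_conv_nxt:
  "closed_walk A c \<longleftrightarrow> c \<noteq> [] \<and> (\<forall>i < length c. adjacent A (c ! i) (nxt c i))"
  unfolding closed_walk_def successively_conv_nth
  by (auto simp: snoc_hd_nth_Suc snoc_hd_nth simp del: nth_append)

lemma nxt_nxt_neq:
  assumes "3 \<le> length c" "i < length c"
  shows "Suc (Suc i) mod length c \<noteq> i"
  using assms by (auto simp: mod_Suc)

lemma cluster_quiver_asym: "cluster_quiver V A \<Longrightarrow> asym A"
  by (auto simp: cluster_quiver_def)

lemma adjacent_in_vertices: "cluster_quiver V A \<Longrightarrow> adjacent A x y \<Longrightarrow> x \<in> V \<and> y \<in> V"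
  by (auto simp: cluster_quiver_def adjacent_def)

definition edge_indicator :: "('a \<times> 'a) set \<Rightarrow> 'a \<Rightarrow> 'a \<Rightarrow> nat" where
  "edge_indicator T x y = of_bool ((x, y) \<in> T \<or> (y, x) \<in> T)"

definition cycle_arrow :: "('a \<times> 'a) set \<Rightarrow> 'a list \<Rightarrow> nat \<Rightarrow> 'a \<times> 'a" where
  "cycle_arrow A c i = (if (c ! i, nxt c i) \<in> A then (c ! i, nxt c i) else (nxt c i, c ! i))"

lemma inj_on_cycle_arrow:
  assumes "distinct c" "3 \<le> length c"
  shows "inj_on (cycle_arrow A c) {..<length c}"
proof (rule inj_onI)
  fix i j assume i: "i \<in> {..<length c}" and j: "j \<in> {..<length c}"
    and eq: "cycle_arrow A c i = cycle_arrow A c j"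
  have n: "Suc k mod length c < length c" for k
    using assms(2) by (intro mod_less_divisor) linarith
  have "(c ! i = c ! j \<and> nxt c i = nxt c j) \<or> (c ! i = nxt c j \<and> nxt c i = c ! j)"
    using eq by (auto simp: cycle_arrow_def split: if_splits)
  then show "i = j"
  proof
    assume "c ! i = c ! j \<and> nxt c i = nxt c j"
    then show "i = j" using assms(1) i j by (simp add: nth_eq_iff_index_eq)
  next
    assume arrow: "c ! i = nxt c j \<and> nxt c i = c ! j"
    have "i = Suc j mod length c"
      using arrow assms(1) i n by (simp add: nxt_def nth_eq_iff_index_eq)
    moreover have "Suc i mod length c = j"
      using arrow assms(1) j n by (simp add: nxt_def nth_eq_iff_index_eq)
    ultimately have "Suc (Suc j) mod length c = j" by (metis mod_Suc_eq)
    with nxt_nxt_neq[OF assms(2)] j show "i = j" by simp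
  qed
qed

lemma cycle_arrows_eq_image:
  assumes "asym A" "\<forall>i < length c. adjacent A (c ! i) (nxt c i)"
  shows "cycle_arrows A c = cycle_arrow A c ` {..<length c}"
  using assms by (fastforce simp: cycle_arrows_def cycle_arrow_def adjacent_def dest: asymD)

lemma cycle_weight_edge_indicator:
  assumes "asym A" "T \<subseteq> A" "is_cycle V A c"
  shows "cycle_weight (edge_indicator T) c = card (cycle_arrows A c \<inter> T)"
proof -
  let ?g = "cycle_arrow A c"
  have "edge_indicator T (c ! i) (nxt c i) = of_bool (?g i \<in> T)" for i
    using assms(1,2) by (auto simp: edge_indicator_def cycle_arrow_def dest: asymD)
  then have "cycle_weight (edge_indicator T) c = card {i \<in> {..<length c}. ?g i \<in> T}"
    by (simp add: cycle_weight_conv_sum Collect_conj_eq lessThan_def)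
  also have "\<dots> = card (?g ` {i \<in> {..<length c}. ?g i \<in> T})"
    using inj_on_cycle_arrow assms(3) by (intro card_image[symmetric]) (auto simp: is_cycle_def intro: inj_on_subset)
  also have "?g ` {i \<in> {..<length c}. ?g i \<in> T} = cycle_arrows A c \<inter> T"
    using cycle_arrows_eq_image[OF assms(1)] assms(3) by (auto simp: is_cycle_def)
  finally show ?thesis .
qed

lemma split_at_non_neighbours:
  assumes "i < j" "j < length c" "nxt c i \<noteq> c ! j" "nxt c j \<noteq> c ! i"
  obtains xs ys zs where "c = xs @ c ! i # ys @ c ! j # zs" "ys \<noteq> []" "xs @ zs \<noteq> []"
proof
  let ?ys = "take (j - Suc i) (drop (Suc i) c)"
  have "drop (Suc i) c = ?ys @ drop j c"
    using assms(1) by (metis append_take_drop_id drop_drop Suc_leI le_add_diff_inverse2)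
  then show "c = take i c @ c ! i # ?ys @ c ! j # drop (Suc j) c"
    using assms(1,2) by (metis Cons_nth_drop_Suc id_take_nth_drop order.strict_trans)
  show "?ys \<noteq> []"
    using assms(1-3) by (cases "j = Suc i") (auto simp: nxt_def)
  show "take i c @ drop (Suc j) c \<noteq> []"
    using assms by (cases "i = 0"; cases "Suc j = length c") (auto simp: nxt_def)
qed

lemma non_full_cycle_chord:
  assumes "asym A" "is_cycle V A c" "\<not> full_cycle V A c"
  obtains xs u ys v zs where
    "c = xs @ u # ys @ v # zs" "ys \<noteq> []" "xs @ zs \<noteq> []" "adjacent A u v"
proof -
  obtain u v where uv: "(u, v) \<in> A" "u \<in> set c" "v \<in> set c" "(u, v) \<notin> cycle_arrows A c"
    using assms(2,3) by (auto simp: full_cycle_def)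
  obtain i j where ij: "i < length c" "j < length c" "u = c ! i" "v = c ! j"
    using uv(2,3) by (metis in_set_conv_nth)
  have "i \<noteq> j"
    using uv(1) ij assms(1) by (auto dest: asymD)
  moreover have "nxt c i \<noteq> c ! j" "nxt c j \<noteq> c ! i"
    using uv ij by (auto simp: cycle_arrows_def)
  moreover have "adjacent A (c ! i) (c ! j)" "adjacent A (c ! j) (c ! i)"
    using uv(1) ij by (auto simp: adjacent_def)
  ultimately show ?thesis
    using that split_at_non_neighbours[of i j c] split_at_non_neighbours[of j i c] ij(1,2)
    by (metis linorder_neqE_nat)
qed

lemma closed_walk_is_cycle:
  assumes "cluster_quiver V A" "closed_walk A c" "distinct c" "3 \<le> length c"
  shows "is_cycle V A c"
proof -
  have "\<forall>i < length c. adjacent A (c ! i) (nxt c i)"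
    using assms(2) by (simp add: closed_walk_conv_nxt)
  then have "set c \<subseteq> V"
    using adjacent_in_vertices[OF assms(1)] by (auto simp: in_set_conv_nth) blast
  with assms(3,4) \<open>\<forall>i < length c. _\<close> show ?thesis
    by (simp add: is_cycle_def)
qed

definition walk_betw :: "('a \<times> 'a) set \<Rightarrow> 'a \<Rightarrow> 'a list \<Rightarrow> 'a \<Rightarrow> bool" where
  "walk_betw A u p v \<longleftrightarrow> p \<noteq> [] \<and> successively (adjacent A) p \<and> hd p = u \<and> last p = v"

lemma walk_betw_snoc: "walk_betw A u p v \<Longrightarrow> adjacent A v w \<Longrightarrow> walk_betw A u (p @ [w]) w"
  by (auto simp: walk_betw_def successively_append_iff)

lemma walk_betw_append:
  "walk_betw A u p v \<Longrightarrow> walk_betw A v (v # t) w \<Longrightarrow> walk_betw A u (p @ t) w"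
  by (auto simp: walk_betw_def successively_append_iff successively_Cons)

locale even_cycle_weights =
  fixes V :: "'a set" and A :: "('a \<times> 'a) set" and f :: "'a \<Rightarrow> 'a \<Rightarrow> nat"
  assumes quiver: "cluster_quiver V A"
    and sym: "f x y = f y x"
    and full_cycle_even: "full_cycle V A c \<Longrightarrow> even (cycle_weight f c)"
begin

lemma short_closed_walk_weight_even:
  assumes "closed_walk A c" "length c \<le> 2"
  shows "even (cycle_weight f c)"
proof -
  consider a where "c = [a]" | a b where "c = [a, b]"
    using assms by (auto simp: closed_walk_def numeral_2_eq_2 le_Suc_eq length_Suc_conv)
  then show ?thesis
    using assms(1) cluster_quiver_asym[OF quiver]
    by cases (auto simp: cycle_weight_def closed_walk_def adjacent_def sym dest: asymD)
qed

lemma non_full_cycle_weight_even: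
  assumes "is_cycle V A c" "\<not> full_cycle V A c" "closed_walk A c"
    and shorter_even:
      "\<And>c'. closed_walk A c' \<Longrightarrow> length c' < length c \<Longrightarrow> even (cycle_weight f c')"
  shows "even (cycle_weight f c)"
proof -
  obtain xs u ys v zs where c: "c = xs @ u # ys @ v # zs"
    and pieces: "ys \<noteq> []" "xs @ zs \<noteq> []" and chord: "adjacent A u v"
    using non_full_cycle_chord[OF cluster_quiver_asym[OF quiver] assms(1,2)] by blast
  have "closed_walk A (u # ys @ v # zs @ xs)"
    using assms(3) closed_walk_rotate[of A xs] by (simp add: c)
  then have "closed_walk A (u # ys @ [v])" "closed_walk A (v # (zs @ xs) @ [u])"
    using closed_walk_chord[of A u ys v "zs @ xs"] chord by simp_all
  with pieces have "even (cycle_weight f (u # ys @ [v]))" "even (cycle_weight f (v # (zs @ xs) @ [u]))"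
    by (auto intro!: shorter_even simp: c)
  with cycle_weight_chord[of f u ys v "zs @ xs", OF sym] show ?thesis
    by (simp add: c cycle_weight_rotate) (metis dvd_add_left_iff dvd_triv_left)
qed

lemma closed_walk_weight_even:
  assumes "closed_walk A c"
  shows "even (cycle_weight f c)"
  using assms
proof (induction "length c" arbitrary: c rule: less_induct)
  case less
  consider "\<not> distinct c" | "length c \<le> 2" | "distinct c" "3 \<le> length c" by linarith
  then show ?case
  proof cases
    case 1
    then show ?thesis using repeated_vertex_weight_even less by blast
  next
    case 2
    then show ?thesis using short_closed_walk_weight_even less.prems by blast
  next
    case 3
    then have "is_cycle V A c" using closed_walk_is_cycle[OF quiver less.prems] by blast
    then show ?thesis
      using full_cycle_even non_full_cycle_weight_even less by blast
  qed
qed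

lemma closed_walk_betw_weight_even:
  assumes "walk_betw A u p u"
  shows "even (path_weight f p)"
proof (cases "length p < 2")
  case True
  then show ?thesis by (cases p) auto
next
  case False
  obtain c where p: "p = c @ [u]"
    using assms by (cases p rule: rev_cases) (auto simp: walk_betw_def)
  with False have "c \<noteq> []" by auto
  with assms p have "p = c @ [hd c]" by (auto simp: walk_betw_def)
  with assms \<open>c \<noteq> []\<close> have walk: "closed_walk A c" and "cycle_weight f c = path_weight f p"
    by (auto simp: closed_walk_def cycle_weight_def walk_betw_def)
  with closed_walk_weight_even[OF walk] show ?thesis by simp
qed

lemma walks_betw_same_parity:
  assumes p: "walk_betw A u p v" and q: "walk_betw A u q v"
  shows "even (path_weight f p + path_weight f q)"
proof -
  have reversed: "walk_betw A v (rev q) u"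
    using q by (auto simp: walk_betw_def hd_rev last_rev adjacent_def elim: successively_mono)
  then obtain t where t: "rev q = v # t"
    by (cases "rev q") (auto simp: walk_betw_def)
  have "walk_betw A u (p @ t) u"
    using walk_betw_append[OF p] reversed t by simp
  moreover have "path_weight f (rev q) = path_weight f q"
    using sym by (simp add: path_weight_rev)
  then have "path_weight f (p @ t) = path_weight f p + path_weight f q"
    using p path_weight_glue[of p "v # t" f] t by (simp add: walk_betw_def)
  ultimately show ?thesis using closed_walk_betw_weight_even by metis
qed

lemma odd_edges_form_cut:
  obtains X where "X \<subseteq> V" "\<And>i j. adjacent A i j \<Longrightarrow> ((i \<in> X) \<noteq> (j \<in> X)) = odd (f i j)"
proof
  define root where "root v = (SOME u. \<exists>p. walk_betw A u p v)" for v
  define X where "X = {v \<in> V. \<exists>p. walk_betw A (root v) p v \<and> odd (path_weight f p)}"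
  show "X \<subseteq> V" by (auto simp: X_def)
  have member: "v \<in> X \<longleftrightarrow> odd (path_weight f p)"
    if p: "walk_betw A (root v) p v" and "v \<in> V" for v p
  proof
    assume "v \<in> X"
    then obtain q where "walk_betw A (root v) q v" "odd (path_weight f q)"
      by (auto simp: X_def)
    with walks_betw_same_parity[OF this(1) p] show "odd (path_weight f p)" by simp
  next
    assume "odd (path_weight f p)"
    with that show "v \<in> X" by (auto simp: X_def)
  qed
  have root_walk: "\<exists>p. walk_betw A (root v) p v" for v
  proof -
    have "\<exists>p. walk_betw A v p v" by (rule exI[of _ "[v]"]) (simp add: walk_betw_def)
    then show ?thesis unfolding root_def by (rule someI)
  qed
  fix i j assume ij: "adjacent A i j"
  then have "adjacent A j i" by (auto simp: adjacent_def)
  with ij have "(\<exists>p. walk_betw A u p i) \<longleftrightarrow> (\<exists>p. walk_betw A u p j)" for u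
    using walk_betw_snoc[of A u _ i j] walk_betw_snoc[of A u _ j i] by blast
  then have "root i = root j" by (simp add: root_def)
  obtain p where p: "walk_betw A (root i) p i" using root_walk by blast
  with ij have "walk_betw A (root j) (p @ [j]) j"
    using \<open>root i = root j\<close> walk_betw_snoc by simp
  moreover have "path_weight f (p @ [j]) = path_weight f p + f i j"
    using p by (auto simp: walk_betw_def path_weight_append)
  ultimately show "((i \<in> X) \<noteq> (j \<in> X)) = odd (f i j)"
    using member p adjacent_in_vertices[OF quiver ij] by auto
qed

end

lemma even_cycle_weights_edge_indicators:
  assumes "cluster_quiver V A" "S \<subseteq> A" "S' \<subseteq> A"
    and "\<And>c. full_cycle V A c \<Longrightarrow>
           even (card (cycle_arrows A c \<inter> S)) = even (card (cycle_arrows A c \<inter> S'))"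
  shows "even_cycle_weights V A (\<lambda>i j. edge_indicator S i j + edge_indicator S' i j)"
proof
  show "cluster_quiver V A" by (fact assms(1))
  show "edge_indicator S x y + edge_indicator S' x y = edge_indicator S y x + edge_indicator S' y x"
    for x y by (auto simp: edge_indicator_def)
  fix c assume full: "full_cycle V A c"
  then have "is_cycle V A c" by (simp add: full_cycle_def)
  with full assms(2-4) show "even (cycle_weight (\<lambda>i j. edge_indicator S i j + edge_indicator S' i j) c)"
    by (simp add: cycle_weight_add cycle_weight_edge_indicator[OF cluster_quiver_asym[OF assms(1)]])
qed

lemma exists_odd_edge:
  assumes "asym A" "S \<subseteq> A" "S' \<subseteq> A" "S \<noteq> S'"
  obtains a b where "adjacent A a b" "odd (edge_indicator S a b + edge_indicator S' a b)"
proof -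
  obtain a b where "(a, b) \<in> A" "((a, b) \<in> S) \<noteq> ((a, b) \<in> S')"
    using assms(2-4) by auto
  moreover from this(1) have "(b, a) \<notin> S" "(b, a) \<notin> S'"
    using assms(1-3) by (auto dest: asymD)
  ultimately have "adjacent A a b" "odd (edge_indicator S a b + edge_indicator S' a b)"
    by (auto simp: adjacent_def edge_indicator_def)
  then show ?thesis by (rule that)
qed

lemma sign_changes_distinct:
  "distinct vs \<Longrightarrow>
    sign_changes vs \<Sigma> i j = (if (i \<in> set vs) \<noteq> (j \<in> set vs) then - \<Sigma> i j else \<Sigma> i j)"
proof (induction vs arbitrary: \<Sigma>)
  case Nil
  then show ?case by (simp add: sign_changes_def)
next
  case (Cons v vs)
  then show ?case
    using Cons.IH[of "sign_change v \<Sigma>"] by (auto simp: sign_changes_def sign_change_def)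
qed

lemma sign_changes_Sigma_q:
  assumes "distinct vs"
    and "\<And>i j. adjacent A i j \<Longrightarrow>
           ((i \<in> set vs) \<noteq> (j \<in> set vs)) = odd (edge_indicator S i j + edge_indicator S' i j)"
  shows "sign_changes vs (Sigma_q A S) = Sigma_q A S'"
proof (intro ext)
  fix i j
  show "sign_changes vs (Sigma_q A S) i j = Sigma_q A S' i j"
  proof (cases "adjacent A i j")
    case True
    then show ?thesis
      using assms(2)[of i j]
      by (simp add: sign_changes_distinct[OF assms(1)] Sigma_q_def edge_indicator_def)
  next
    case False
    then show ?thesis by (simp add: sign_changes_distinct[OF assms(1)] Sigma_q_def)
  qed
qed

theorem lemma6p2:
  fixes V :: "'a set" and A S S' :: "('a \<times> 'a) set"
  assumes "cluster_quiver V A"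
    and "simply_laced A"
    and "\<And>c. full_cycle V A c \<Longrightarrow> oriented_cycle A c"
    and "S \<subseteq> A" and "S' \<subseteq> A" and "S \<noteq> S'"
    and "\<And>c. full_cycle V A c \<Longrightarrow>
           even (card (cycle_arrows A c \<inter> S)) = even (card (cycle_arrows A c \<inter> S'))"
  shows "\<exists>vs. distinct vs \<and> set vs \<subseteq> V \<and> set vs \<noteq> V
           \<and> sign_changes vs (Sigma_q A S) = Sigma_q A S'"
proof -
  interpret even_cycle_weights V A "\<lambda>i j. edge_indicator S i j + edge_indicator S' i j"
    using even_cycle_weights_edge_indicators assms(1,4,5,7) by blast
  obtain X where X: "X \<subseteq> V" "\<And>i j. adjacent A i j \<Longrightarrow>
      ((i \<in> X) \<noteq> (j \<in> X)) = odd (edge_indicator S i j + edge_indicator S' i j)"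
    using odd_edges_form_cut by blast
  obtain vs where vs: "set vs = X" "distinct vs"
    using finite_distinct_list finite_subset[OF X(1)] assms(1) by (metis cluster_quiver_def)
  obtain a b where "adjacent A a b" "odd (edge_indicator S a b + edge_indicator S' a b)"
    using exists_odd_edge cluster_quiver_asym assms(1,4-6) by metis
  then have "X \<noteq> V" using X adjacent_in_vertices[OF assms(1)] by blast
  with vs X show ?thesis using sign_changes_Sigma_q by blast
qed

end
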